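(* Assume the Lipschitz gradient assumption, $r_1>L_x$, $r_2>L_y$, and let $\{(x^t,y^t,z^t,v^t)\}$ be generated by DS-GDA with $c,\alpha>0$, $\beta,\mu\in(0,1)$. There exists $\rho>0$, depending only on $L_x,L_y,r_1,r_2,c,\alpha,\beta,\mu$, such that for every $\epsilon\ge0$ and $t\ge0$: if $$\max\Big\{\frac{\|x^t-x^{t+1}\|}{c},\frac{\|y^t-y^t_+(z^t,v^t)\|}{\alpha},\frac{\|z^t-z^{t+1}\|}{\beta},\frac{\|v^t-v^{t+1}\|}{\mu}\Big\}\le\epsilon,$$ then $(x^{t+1},y^{t+1})$ is a $\rho\epsilon$-GS.
   Context: Let $\mathcal X\subset\mathbb R^n$, $\mathcal Y\subset\mathbb R^d$ be nonempty convex compact sets and $f:\mathbb R^n\times\mathbb R^d\to\mathbb R$ continuously differentiable. Lipschitz gradient assumption: there are $L_x,L_y>0$ such that for all $x,x'\in\mathcal X$, $y,y'\in\mathcal Y$, $\|\nabla_x f(x,y)-\nabla_x f(x',y')\|\le L_x(\|x-x'\|+\|y-y'\|)$ and $\|\nabla_y f(x,y)-\nabla_y f(x',y')\|\le L_y(\|x-x'\|+\|y-y'\|)$. $F(x,y,z,v)=f(x,y)+\frac{r_1}{2}\|x-z\|^2-\frac{r_2}{2}\|y-v\|^2$; $x(y,z,v)=\arg\min_{x\in\mathcal X}F(x,y,z,v)$. DS-GDA: given $x^0,y^0,z^0,v^0$, for $t\ge0$: $x^{t+1}=\mathrm{proj}_{\mathcal X}(x^t-c\nabla_xF(x^t,y^t,z^t,v^t))$;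 $y^{t+1}=\mathrm{proj}_{\mathcal Y}(y^t+\alpha\nabla_yF(x^{t+1},y^t,z^t,v^t))$; $z^{t+1}=z^t+\beta(x^{t+1}-z^t)$; $v^{t+1}=v^t+\mu(y^{t+1}-v^t)$. $y^t_+(z^t,v^t)=\mathrm{proj}_{\mathcal Y}(y^t+\alpha\nabla_yF(x(y^t,z^t,v^t),y^t,z^t,v^t))$. Let $N_{\mathcal X}(x)=\partial\mathbf 1_{\mathcal X}(x)$ denote the normal cone. A point $(x,y)\in\mathcal X\times\mathcal Y$ is an $\epsilon$-game stationary point ($\epsilon$-GS) if $\mathrm{dist}(0,\nabla_xf(x,y)+N_{\mathcal X}(x))\le\epsilon$ and $\mathrm{dist}(0,-\nabla_yf(x,y)+N_{\mathcal Y}(y))\le\epsilon$. *)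

theory Defs
  imports "HOL-Analysis.Analysis"
begin

definition C1_with_grads ::
  "('a::euclidean_space \<Rightarrow> 'b::euclidean_space \<Rightarrow> real) \<Rightarrow> ('a \<Rightarrow> 'b \<Rightarrow> 'a) \<Rightarrow> ('a \<Rightarrow> 'b \<Rightarrow> 'b) \<Rightarrow> bool" where
  "C1_with_grads f gx gy \<longleftrightarrow>
     (\<forall>x y. ((\<lambda>p. f (fst p) (snd p)) has_derivative
              (\<lambda>h. gx x y \<bullet> fst h + gy x y \<bullet> snd h)) (at (x, y))) \<and>
     continuous_on UNIV (\<lambda>p. gx (fst p) (snd p)) \<and>
     continuous_on UNIV (\<lambda>p. gy (fst p) (snd p))"

definition lipschitz_grads ::
  "'a::euclidean_space set \<Rightarrow> 'b::euclidean_space set \<Rightarrow> ('a \<Rightarrow> 'b \<Rightarrow> 'a) \<Rightarrow> ('a \<Rightarrow> 'b \<Rightarrow> 'b) \<Rightarrow> real \<Rightarrow> real \<Rightarrow> bool" where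
  "lipschitz_grads X Y gx gy Lx Ly \<longleftrightarrow>
     (\<forall>x\<in>X. \<forall>x'\<in>X. \<forall>y\<in>Y. \<forall>y'\<in>Y.
        norm (gx x y - gx x' y') \<le> Lx * (norm (x - x') + norm (y - y')) \<and>
        norm (gy x y - gy x' y') \<le> Ly * (norm (x - x') + norm (y - y')))"

definition Fdsgda ::
  "('a::euclidean_space \<Rightarrow> 'b::euclidean_space \<Rightarrow> real) \<Rightarrow> real \<Rightarrow> real \<Rightarrow> 'a \<Rightarrow> 'b \<Rightarrow> 'a \<Rightarrow> 'b \<Rightarrow> real" where
  "Fdsgda f r1 r2 x y z v = f x y + r1 / 2 * (norm (x - z))\<^sup>2 - r2 / 2 * (norm (y - v))\<^sup>2"

definition gradxF :: "('a::euclidean_space \<Rightarrow> 'b::euclidean_space \<Rightarrow> 'a) \<Rightarrow> real \<Rightarrow> 'a \<Rightarrow> 'b \<Rightarrow> 'a \<Rightarrow> 'a" where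
  "gradxF gx r1 x y z = gx x y + r1 *\<^sub>R (x - z)"

definition gradyF :: "('a::euclidean_space \<Rightarrow> 'b::euclidean_space \<Rightarrow> 'b) \<Rightarrow> real \<Rightarrow> 'a \<Rightarrow> 'b \<Rightarrow> 'b \<Rightarrow> 'b" where
  "gradyF gy r2 x y v = gy x y - r2 *\<^sub>R (y - v)"

text \<open>x(y,z,v) = argmin over X of F(., y, z, v) (unique when r1 > Lx).\<close>
definition xopt ::
  "'a::euclidean_space set \<Rightarrow> ('a \<Rightarrow> 'b::euclidean_space \<Rightarrow> real) \<Rightarrow> real \<Rightarrow> real \<Rightarrow> 'b \<Rightarrow> 'a \<Rightarrow> 'b \<Rightarrow> 'a" where
  "xopt X f r1 r2 y z v =
     (THE x. x \<in> X \<and> (\<forall>x'\<in>X. Fdsgda f r1 r2 x y z v \<le> Fdsgda f r1 r2 x' y z v))"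

definition dsgda_seq ::
  "'a::euclidean_space set \<Rightarrow> 'b::euclidean_space set \<Rightarrow> ('a \<Rightarrow> 'b \<Rightarrow> 'a) \<Rightarrow> ('a \<Rightarrow> 'b \<Rightarrow> 'b) \<Rightarrow>
   real \<Rightarrow> real \<Rightarrow> real \<Rightarrow> real \<Rightarrow> real \<Rightarrow> real \<Rightarrow>
   (nat \<Rightarrow> 'a) \<Rightarrow> (nat \<Rightarrow> 'b) \<Rightarrow> (nat \<Rightarrow> 'a) \<Rightarrow> (nat \<Rightarrow> 'b) \<Rightarrow> bool" where
  "dsgda_seq X Y gx gy r1 r2 c \<alpha> \<beta> \<mu> xs ys zs vs \<longleftrightarrow>
     (\<forall>t. xs (Suc t) = closest_point X (xs t - c *\<^sub>R gradxF gx r1 (xs t) (ys t) (zs t)) \<and>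
          ys (Suc t) = closest_point Y (ys t + \<alpha> *\<^sub>R gradyF gy r2 (xs (Suc t)) (ys t) (vs t)) \<and>
          zs (Suc t) = zs t + \<beta> *\<^sub>R (xs (Suc t) - zs t) \<and>
          vs (Suc t) = vs t + \<mu> *\<^sub>R (ys (Suc t) - vs t))"

definition yplus ::
  "'a::euclidean_space set \<Rightarrow> 'b::euclidean_space set \<Rightarrow> ('a \<Rightarrow> 'b \<Rightarrow> real) \<Rightarrow> ('a \<Rightarrow> 'b \<Rightarrow> 'b) \<Rightarrow>
   real \<Rightarrow> real \<Rightarrow> real \<Rightarrow> 'b \<Rightarrow> 'a \<Rightarrow> 'b \<Rightarrow> 'b" where
  "yplus X Y f gy r1 r2 \<alpha> y z v =
     closest_point Y (y + \<alpha> *\<^sub>R gradyF gy r2 (xopt X f r1 r2 y z v) y v)"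

definition normal_cone :: "'a::euclidean_space set \<Rightarrow> 'a \<Rightarrow> 'a set" where
  "normal_cone S x = (if x \<in> S then {g. \<forall>x'\<in>S. g \<bullet> (x' - x) \<le> 0} else {})"

definition eps_GS ::
  "'a::euclidean_space set \<Rightarrow> 'b::euclidean_space set \<Rightarrow> ('a \<Rightarrow> 'b \<Rightarrow> 'a) \<Rightarrow> ('a \<Rightarrow> 'b \<Rightarrow> 'b) \<Rightarrow>
   real \<Rightarrow> 'a \<Rightarrow> 'b \<Rightarrow> bool" where
  "eps_GS X Y gx gy \<epsilon> x y \<longleftrightarrow> x \<in> X \<and> y \<in> Y \<and>
     infdist 0 ((\<lambda>n. gx x y + n) ` normal_cone X x) \<le> \<epsilon> \<and>
     infdist 0 ((\<lambda>n. - gy x y + n) ` normal_cone Y y) \<le> \<epsilon>"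

end

theory Submission
  imports Defs
begin

text \<open>Since \<open>r1 > Lx\<close>, \<open>F(\<cdot>, y, z, v)\<close> is strongly convex, so its gradient is strongly
  monotone and the x-update is one projected-gradient step for the variational inequality
  characterising the minimiser \<open>x(y\<^sup>t, z\<^sup>t, v\<^sup>t)\<close>; the standard error bound for such
  inequalities gives \<open>\<parallel>x\<^sup>t\<^sup>+\<^sup>1 - x(y\<^sup>t, z\<^sup>t, v\<^sup>t)\<parallel> = O(\<parallel>x\<^sup>t - x\<^sup>t\<^sup>+\<^sup>1\<parallel>)\<close>.
  As \<open>y\<^sup>t\<^sub>+\<close> and \<open>y\<^sup>t\<^sup>+\<^sup>1\<close> are projections of points that differ only through this
  x-argument of \<open>\<nabla>\<^sub>yF\<close>, also \<open>\<parallel>y\<^sup>t - y\<^sup>t\<^sup>+\<^sup>1\<parallel> = O(\<epsilon>)\<close>. Finally a projected step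
  \<open>p = proj(u - c d)\<close> certifies \<open>(u - c d - p)/c\<close> as a normal vector at \<open>p\<close>, so both
  stationarity residuals at \<open>(x\<^sup>t\<^sup>+\<^sup>1, y\<^sup>t\<^sup>+\<^sup>1)\<close> are bounded by gradient differences and
  the four step lengths, all \<open>O(\<epsilon>)\<close>.\<close>

lemma minimum_on_convex_imp_derivative_nonneg:
  fixes h :: "'a::real_normed_vector \<Rightarrow> real"
  assumes h: "(h has_derivative h') (at x)" and S: "convex S" "x \<in> S" "w \<in> S"
    and min: "\<forall>u\<in>S. h x \<le> h u"
  shows "h' (w - x) \<ge> 0"
proof (rule ccontr)
  assume neg: "\<not> h' (w - x) \<ge> 0"
  have lin: "linear h'" using h has_derivative_linear by blast
  have "((\<lambda>s::real. x + s *\<^sub>R (w - x)) has_derivative (\<lambda>s. s *\<^sub>R (w - x))) (at 0)"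
    by (auto intro!: derivative_eq_intros)
  from diff_chain_at[OF this, of h h'] h
  have "((\<lambda>s. h (x + s *\<^sub>R (w - x))) has_real_derivative h' (w - x)) (at 0)"
    unfolding has_field_derivative_def o_def
    by (simp add: linear_scale[OF lin] mult.commute[of _ "h' (w - x)"])
  from DERIV_neg_dec_right[OF this] neg
  obtain e where e: "e > 0" "\<And>s. 0 < s \<Longrightarrow> s < e \<Longrightarrow> h (x + s *\<^sub>R (w - x)) < h x"
    by fastforce
  define s where "s = min (e / 2) 1"
  have s: "0 < s" "s < e" "s \<le> 1" using e(1) unfolding s_def by auto
  have "x + s *\<^sub>R (w - x) = (1 - s) *\<^sub>R x + s *\<^sub>R w" by (simp add: algebra_simps)
  also have "\<dots> \<in> S" using convexD_alt[OF S] s by auto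
  finally show False using min e(2)[OF s(1,2)] by fastforce
qed

lemma has_derivative_Fdsgda_x:
  assumes "C1_with_grads f gx gy"
  shows "((\<lambda>u. Fdsgda f r1 r2 u y z v) has_derivative (\<lambda>d. gradxF gx r1 x y z \<bullet> d)) (at x)"
proof -
  have "((\<lambda>p. f (fst p) (snd p)) has_derivative (\<lambda>h. gx x y \<bullet> fst h + gy x y \<bullet> snd h)) (at (x, y))"
    using assms unfolding C1_with_grads_def by blast
  moreover have "((\<lambda>u. (u, y)) has_derivative (\<lambda>d. (d, 0))) (at x)"
    by (auto intro!: derivative_eq_intros)
  ultimately have "((\<lambda>u. f u y) has_derivative (\<lambda>d. gx x y \<bullet> d)) (at x)"
    using diff_chain_at[of "\<lambda>u. (u, y)" "\<lambda>d. (d, 0)"] by (force simp: o_def)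
  then show ?thesis
    unfolding Fdsgda_def gradxF_def power2_norm_eq_inner
    by (auto intro!: derivative_eq_intros simp: inner_add_left inner_commute algebra_simps)
qed

lemma projected_step_in_normal_cone:
  fixes u :: "'a::euclidean_space"
  assumes "convex S" "closed S" "S \<noteq> {}" "c > 0"
  shows "(1 / c) *\<^sub>R (u - closest_point S u) \<in> normal_cone S (closest_point S u)"
  using closest_point_dot[OF assms(1,2)] closest_point_in_set[OF assms(2,3)] assms(4)
  by (auto simp: normal_cone_def divide_nonpos_pos)

lemma infdist_normal_cone_projected_step:
  fixes x d g :: "'a::euclidean_space"
  assumes "convex S" "closed S" "S \<noteq> {}" "c > 0"
  defines "p \<equiv> closest_point S (x - c *\<^sub>R d)"
  shows "infdist 0 ((\<lambda>n. g + n) ` normal_cone S p) \<le> norm (g - d) + norm (x - p) / c"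
proof -
  define n where "n = (1 / c) *\<^sub>R (x - c *\<^sub>R d - p)"
  have "n \<in> normal_cone S p"
    unfolding n_def p_def by (rule projected_step_in_normal_cone[OF assms(1-4)])
  then have "infdist 0 ((\<lambda>n. g + n) ` normal_cone S p) \<le> norm (g + n)"
    by (metis dist_0_norm image_eqI infdist_le)
  also have "g + n = (g - d) + (1 / c) *\<^sub>R (x - p)"
    using assms(4) by (simp add: n_def algebra_simps)
  also have "norm \<dots> \<le> norm (g - d) + norm (x - p) / c"
    using norm_triangle_ineq[of "g - d" "(1 / c) *\<^sub>R (x - p)"] assms(4) by simp
  finally show ?thesis .
qed

lemma strongly_monotone_variational_error_bound:
  fixes G :: "'a::euclidean_space \<Rightarrow> 'a"
  assumes S: "convex S" "closed S" and x: "x \<in> S" and s: "s \<in> S" and c: "c > 0" and L: "L \<ge> 0"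
    and vi: "\<forall>w\<in>S. G s \<bullet> (w - s) \<ge> 0"
    and mono: "\<forall>a\<in>S. \<forall>b\<in>S. m * (norm (a - b))\<^sup>2 \<le> (G a - G b) \<bullet> (a - b)"
    and lip: "\<forall>a\<in>S. \<forall>b\<in>S. norm (G a - G b) \<le> L * norm (a - b)"
  defines "p \<equiv> closest_point S (x - c *\<^sub>R G x)"
  shows "m * norm (p - s) \<le> (L + 1 / c) * norm (x - p)"
proof -
  have p: "p \<in> S" using closest_point_in_set[OF S(2)] x unfolding p_def by blast
  have proj: "c * (G x \<bullet> (p - s)) \<le> (x - p) \<bullet> (p - s)"
    using closest_point_dot[OF S s, of "x - c *\<^sub>R G x"]
    by (simp add: p_def[symmetric] inner_diff_left inner_diff_right inner_commute algebra_simps)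
  have "m * (norm (p - s))\<^sup>2 \<le> (G p - G s) \<bullet> (p - s)" using mono p s by blast
  also have "\<dots> \<le> (G p - G x) \<bullet> (p - s) + G x \<bullet> (p - s)"
    using vi p by (simp add: inner_diff_left)
  also have "\<dots> \<le> L * norm (p - x) * norm (p - s) + norm (x - p) * norm (p - s) / c"
  proof -
    have "(G p - G x) \<bullet> (p - s) \<le> L * norm (p - x) * norm (p - s)"
      using norm_cauchy_schwarz[of "G p - G x" "p - s"] lip p x
      by (meson mult_right_mono norm_ge_zero order_trans)
    moreover have "G x \<bullet> (p - s) \<le> norm (x - p) * norm (p - s) / c"
      using proj norm_cauchy_schwarz[of "x - p" "p - s"] c by (simp add: pos_le_divide_eq mult.commute)
    ultimately show ?thesis by linarith
  qed
  also have "\<dots> = ((L + 1 / c) * norm (x - p)) * norm (p - s)"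
    by (simp add: norm_minus_commute algebra_simps)
  finally have "(m * norm (p - s)) * norm (p - s) \<le> ((L + 1 / c) * norm (x - p)) * norm (p - s)"
    by (simp add: power2_eq_square mult.assoc)
  then show ?thesis
    using L c by (cases "p = s") (auto simp: mult_le_cancel_right_pos)
qed

lemma gradxF_strongly_monotone:
  assumes L: "lipschitz_grads X Y gx gy Lx Ly" and "a \<in> X" "b \<in> X" "y \<in> Y"
  shows "(r1 - Lx) * (norm (a - b))\<^sup>2 \<le> (gradxF gx r1 a y z - gradxF gx r1 b y z) \<bullet> (a - b)"
proof -
  have "norm (gx a y - gx b y) \<le> Lx * norm (a - b)"
    using L assms(2-4) unfolding lipschitz_grads_def by fastforce
  then have "- (Lx * (norm (a - b))\<^sup>2) \<le> (gx a y - gx b y) \<bullet> (a - b)"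
    using norm_cauchy_schwarz[of "-(gx a y - gx b y)" "a - b"]
    by (smt (verit, best) inner_minus_left mult_right_mono norm_ge_zero norm_minus_cancel power2_eq_square mult.assoc)
  moreover have "(gradxF gx r1 a y z - gradxF gx r1 b y z) \<bullet> (a - b)
      = (gx a y - gx b y) \<bullet> (a - b) + r1 * (norm (a - b))\<^sup>2"
    unfolding gradxF_def power2_norm_eq_inner by (simp add: algebra_simps inner_diff_left)
  ultimately show ?thesis by (simp add: algebra_simps)
qed

lemma gradxF_lipschitz:
  assumes L: "lipschitz_grads X Y gx gy Lx Ly" and "r1 \<ge> 0" "a \<in> X" "b \<in> X" "y \<in> Y"
  shows "norm (gradxF gx r1 a y z - gradxF gx r1 b y z) \<le> (Lx + r1) * norm (a - b)"
proof -
  have "norm (gx a y - gx b y) \<le> Lx * norm (a - b)"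
    using L assms(3-5) unfolding lipschitz_grads_def by fastforce
  moreover have "gradxF gx r1 a y z - gradxF gx r1 b y z = (gx a y - gx b y) + r1 *\<^sub>R (a - b)"
    unfolding gradxF_def by (simp add: algebra_simps)
  ultimately show ?thesis
    using norm_triangle_ineq[of "gx a y - gx b y" "r1 *\<^sub>R (a - b)"] \<open>r1 \<ge> 0\<close>
    by (simp add: distrib_right)
qed

lemma Fdsgda_minimizer_variational_ineq:
  assumes "C1_with_grads f gx gy" "convex X" "x \<in> X"
    and "\<forall>x'\<in>X. Fdsgda f r1 r2 x y z v \<le> Fdsgda f r1 r2 x' y z v"
  shows "\<forall>w\<in>X. gradxF gx r1 x y z \<bullet> (w - x) \<ge> 0"
  using minimum_on_convex_imp_derivative_nonneg[OF has_derivative_Fdsgda_x[OF assms(1)] assms(2,3) _ assms(4)]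
  by blast

lemma xopt_minimizes:
  fixes f :: "'a::euclidean_space \<Rightarrow> 'b::euclidean_space \<Rightarrow> real"
  assumes C1: "C1_with_grads f gx gy" and L: "lipschitz_grads X Y gx gy Lx Ly" and r: "Lx < r1"
    and X: "X \<noteq> {}" "convex X" "compact X" and y: "y \<in> Y"
  shows "xopt X f r1 r2 y z v \<in> X"
    and "\<forall>x'\<in>X. Fdsgda f r1 r2 (xopt X f r1 r2 y z v) y z v \<le> Fdsgda f r1 r2 x' y z v"
proof -
  let ?min = "\<lambda>x. x \<in> X \<and> (\<forall>x'\<in>X. Fdsgda f r1 r2 x y z v \<le> Fdsgda f r1 r2 x' y z v)"
  have "continuous_on X (\<lambda>x. Fdsgda f r1 r2 x y z v)"
    using has_derivative_Fdsgda_x[OF C1]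
    by (intro has_derivative_continuous_on) (rule has_derivative_at_withinI)
  then obtain m where m: "?min m"
    using continuous_attains_inf[OF X(3,1)] by blast
  have "a = m" if a: "?min a" for a
  proof -
    have "gradxF gx r1 a y z \<bullet> (m - a) \<ge> 0" "gradxF gx r1 m y z \<bullet> (a - m) \<ge> 0"
      using Fdsgda_minimizer_variational_ineq[OF C1 X(2)] a m by blast+
    then have "(gradxF gx r1 a y z - gradxF gx r1 m y z) \<bullet> (a - m) \<le> 0"
      by (simp add: inner_diff_left inner_diff_right inner_commute)
    with gradxF_strongly_monotone[OF L _ _ y, of a m r1 z] a m
    have "(r1 - Lx) * (norm (a - m))\<^sup>2 \<le> 0" by linarith
    with r show ?thesis by (simp add: mult_le_0_iff)
  qed
  with m have "?min (xopt X f r1 r2 y z v)"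
    unfolding xopt_def by (rule theI)
  then show "xopt X f r1 r2 y z v \<in> X"
    and "\<forall>x'\<in>X. Fdsgda f r1 r2 (xopt X f r1 r2 y z v) y z v \<le> Fdsgda f r1 r2 x' y z v"
    by auto
qed

lemma xopt_projected_gradient_error_bound:
  fixes f :: "'a::euclidean_space \<Rightarrow> 'b::euclidean_space \<Rightarrow> real" and z :: 'a and v :: 'b
  assumes C1: "C1_with_grads f gx gy" and L: "lipschitz_grads X Y gx gy Lx Ly"
    and Lx: "0 \<le> Lx" "Lx < r1" and X: "X \<noteq> {}" "convex X" "compact X"
    and x: "x \<in> X" and y: "y \<in> Y" and c: "c > 0"
  defines "p \<equiv> closest_point X (x - c *\<^sub>R gradxF gx r1 x y z)"
  shows "(r1 - Lx) * norm (p - xopt X f r1 r2 y z v) \<le> (Lx + r1 + 1 / c) * norm (x - p)"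
proof -
  define s where "s = xopt X f r1 r2 y z v"
  have s: "s \<in> X" "\<forall>w\<in>X. gradxF gx r1 s y z \<bullet> (w - s) \<ge> 0"
    using xopt_minimizes[OF C1 L Lx(2) X y, of r2 z v] Fdsgda_minimizer_variational_ineq[OF C1 X(2)]
    unfolding s_def by blast+
  show ?thesis
    unfolding p_def s_def[symmetric]
  proof (rule strongly_monotone_variational_error_bound[where G = "\<lambda>u. gradxF gx r1 u y z",
        OF X(2) compact_imp_closed[OF X(3)] x s(1) c _ s(2)])
    show "0 \<le> Lx + r1" using Lx by simp
    show "\<forall>a\<in>X. \<forall>b\<in>X. (r1 - Lx) * (norm (a - b))\<^sup>2 \<le> (gradxF gx r1 a y z - gradxF gx r1 b y z) \<bullet> (a - b)"
      using gradxF_strongly_monotone[OF L _ _ y] by blast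
    show "\<forall>a\<in>X. \<forall>b\<in>X. norm (gradxF gx r1 a y z - gradxF gx r1 b y z) \<le> (Lx + r1) * norm (a - b)"
      using gradxF_lipschitz[OF L _ _ _ y] Lx by simp
  qed
qed

text \<open>The bound \<open>\<parallel>y\<^sup>t - y\<^sup>t\<^sup>+\<^sup>1\<parallel> \<le> D \<epsilon>\<close>: \<open>\<alpha> \<epsilon>\<close> from \<open>y\<^sup>t\<^sub>+\<close>, plus \<open>\<alpha> Ly\<close> times the
  error bound \<open>c (Lx + r1 + 1/c) \<epsilon> / (r1 - Lx)\<close> on \<open>\<parallel>x\<^sup>t\<^sup>+\<^sup>1 - x(y\<^sup>t, z\<^sup>t, v\<^sup>t)\<parallel>\<close>.\<close>
definition dsgda_ystep_bound :: "real \<Rightarrow> real \<Rightarrow> real \<Rightarrow> real \<Rightarrow> real \<Rightarrow> real" where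
  "dsgda_ystep_bound Lx Ly r1 c \<alpha> = \<alpha> * (1 + Ly * (c * Lx + c * r1 + 1) / (r1 - Lx))"

definition dsgda_rho :: "real \<Rightarrow> real \<Rightarrow> real \<Rightarrow> real \<Rightarrow> real \<Rightarrow> real \<Rightarrow> real" where
  "dsgda_rho Lx Ly r1 r2 c \<alpha> =
     (let D = dsgda_ystep_bound Lx Ly r1 c \<alpha>
      in max (Lx * (c + D) + r1 * (c + 1) + 1) (Ly * D + r2 * (D + 1) + D / \<alpha>))"

lemma dsgda_rho_pos:
  assumes "0 \<le> Lx" "Lx < r1" "0 \<le> Ly" "c > 0" "\<alpha> > 0"
  shows "dsgda_rho Lx Ly r1 r2 c \<alpha> > 0"
proof -
  have "dsgda_ystep_bound Lx Ly r1 c \<alpha> \<ge> 0"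
    using assms unfolding dsgda_ystep_bound_def by simp
  then show ?thesis
    using assms unfolding dsgda_rho_def Let_def by (smt (verit) max.cobounded1 mult_nonneg_nonneg)
qed

lemma dsgda_y_step_le:
  fixes f :: "'a::euclidean_space \<Rightarrow> 'b::euclidean_space \<Rightarrow> real" and z0 :: 'a and v0 :: 'b
  assumes C1: "C1_with_grads f gx gy" and L: "lipschitz_grads X Y gx gy Lx Ly"
    and Lx: "0 \<le> Lx" "Lx < r1" and Ly: "0 \<le> Ly" and X: "X \<noteq> {}" "convex X" "compact X"
    and Y: "Y \<noteq> {}" "convex Y" "closed Y" and x0: "x0 \<in> X" and y0: "y0 \<in> Y"
    and c: "c > 0" and \<alpha>: "\<alpha> > 0"
    and x1: "x1 = closest_point X (x0 - c *\<^sub>R gradxF gx r1 x0 y0 z0)"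
    and y1: "y1 = closest_point Y (y0 + \<alpha> *\<^sub>R gradyF gy r2 x1 y0 v0)"
    and dx: "norm (x0 - x1) \<le> c * \<epsilon>"
    and dyp: "norm (y0 - yplus X Y f gy r1 r2 \<alpha> y0 z0 v0) \<le> \<alpha> * \<epsilon>"
  shows "norm (y0 - y1) \<le> dsgda_ystep_bound Lx Ly r1 c \<alpha> * \<epsilon>"
proof -
  define xo where "xo = xopt X f r1 r2 y0 z0 v0"
  define K where "K = (c * Lx + c * r1 + 1) / (r1 - Lx)"
  have x1X: "x1 \<in> X" and xoX: "xo \<in> X"
    using closest_point_in_set[OF compact_imp_closed[OF X(3)] X(1)] xopt_minimizes[OF C1 L Lx(2) X y0]
    unfolding x1 xo_def by auto
  have "(r1 - Lx) * norm (x1 - xo) \<le> (Lx + r1 + 1 / c) * norm (x0 - x1)"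
    using xopt_projected_gradient_error_bound[OF C1 L Lx X x0 y0 c] unfolding x1 xo_def .
  also have "\<dots> \<le> (Lx + r1 + 1 / c) * (c * \<epsilon>)"
    using dx Lx c by (intro mult_left_mono) auto
  also have "\<dots> = (c * Lx + c * r1 + 1) * \<epsilon>"
    using c by (simp add: field_simps)
  finally have dxo: "norm (xo - x1) \<le> K * \<epsilon>"
    using Lx by (simp add: K_def norm_minus_commute field_simps)
  have "norm (yplus X Y f gy r1 r2 \<alpha> y0 z0 v0 - y1) \<le> \<alpha> * norm (gy xo y0 - gy x1 y0)"
  proof -
    have "(y0 + \<alpha> *\<^sub>R (gy xo y0 - r2 *\<^sub>R (y0 - v0))) - (y0 + \<alpha> *\<^sub>R (gy x1 y0 - r2 *\<^sub>R (y0 - v0)))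
        = \<alpha> *\<^sub>R (gy xo y0 - gy x1 y0)"
      by (simp add: algebra_simps)
    then show ?thesis
      using closest_point_lipschitz[OF Y(2,3,1)] \<alpha>
      unfolding yplus_def y1 xo_def[symmetric] dist_norm gradyF_def by (metis abs_of_pos norm_scaleR)
  qed
  also have "\<dots> \<le> \<alpha> * (Ly * (K * \<epsilon>))"
    using L xoX x1X y0 dxo Ly \<alpha> unfolding lipschitz_grads_def
    by (smt (verit, best) mult_left_mono diff_self norm_zero)
  finally have "norm (yplus X Y f gy r1 r2 \<alpha> y0 z0 v0 - y1) \<le> \<alpha> * (Ly * (K * \<epsilon>))" .
  then show ?thesis
    using norm_triangle_ineq[of "y0 - yplus X Y f gy r1 r2 \<alpha> y0 z0 v0" "yplus X Y f gy r1 r2 \<alpha> y0 z0 v0 - y1"] dyp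
    unfolding dsgda_ystep_bound_def K_def by (simp add: algebra_simps)
qed

lemma dsgda_x_residual_le:
  assumes L: "lipschitz_grads X Y gx gy Lx Ly" and "0 \<le> Lx" "0 \<le> r1"
    and X: "X \<noteq> {}" "convex X" "closed X" and mem: "x0 \<in> X" "x1 \<in> X" "y0 \<in> Y" "y1 \<in> Y" and c: "c > 0"
    and x1: "x1 = closest_point X (x0 - c *\<^sub>R gradxF gx r1 x0 y0 z0)"
    and dx: "norm (x0 - x1) \<le> c * \<epsilon>" and dz: "norm (x1 - z0) \<le> \<epsilon>" and dy: "norm (y0 - y1) \<le> D * \<epsilon>"
  shows "infdist 0 ((\<lambda>n. gx x1 y1 + n) ` normal_cone X x1) \<le> (Lx * (c + D) + r1 * (c + 1) + 1) * \<epsilon>"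
proof -
  have "infdist 0 ((\<lambda>n. gx x1 y1 + n) ` normal_cone X x1)
      \<le> norm ((gx x1 y1 - gx x0 y0) - r1 *\<^sub>R (x0 - z0)) + norm (x0 - x1) / c"
    using infdist_normal_cone_projected_step[OF X(2,3,1) c,
        where x = x0 and d = "gradxF gx r1 x0 y0 z0" and g = "gx x1 y1"]
    unfolding x1[symmetric] by (simp add: gradxF_def algebra_simps)
  also have "\<dots> \<le> Lx * (norm (x1 - x0) + norm (y1 - y0)) + r1 * (norm (x0 - x1) + norm (x1 - z0)) + \<epsilon>"
  proof -
    have "norm (gx x1 y1 - gx x0 y0) \<le> Lx * (norm (x1 - x0) + norm (y1 - y0))"
      using L mem unfolding lipschitz_grads_def by blast
    moreover have "norm (x0 - z0) \<le> norm (x0 - x1) + norm (x1 - z0)"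
      using norm_triangle_ineq[of "x0 - x1" "x1 - z0"] by simp
    moreover have "norm (x0 - x1) / c \<le> \<epsilon>" using dx c by (simp add: divide_le_eq mult.commute)
    ultimately show ?thesis
      using norm_triangle_ineq4[of "gx x1 y1 - gx x0 y0" "r1 *\<^sub>R (x0 - z0)"] \<open>0 \<le> r1\<close>
      by (smt (verit) mult_left_mono norm_scaleR abs_of_nonneg)
  qed
  also have "\<dots> \<le> Lx * (c * \<epsilon> + D * \<epsilon>) + r1 * (c * \<epsilon> + \<epsilon>) + \<epsilon>"
    using dx dz dy assms(2,3) by (intro add_mono mult_left_mono) (auto simp: norm_minus_commute)
  finally show ?thesis by (simp add: algebra_simps)
qed

lemma dsgda_y_residual_le:
  assumes L: "lipschitz_grads X Y gx gy Lx Ly" and "0 \<le> Ly" "0 \<le> r2"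
    and Y: "Y \<noteq> {}" "convex Y" "closed Y" and mem: "x1 \<in> X" "y0 \<in> Y" "y1 \<in> Y" and \<alpha>: "\<alpha> > 0"
    and y1: "y1 = closest_point Y (y0 + \<alpha> *\<^sub>R gradyF gy r2 x1 y0 v0)"
    and dy: "norm (y0 - y1) \<le> D * \<epsilon>" and dv: "norm (y1 - v0) \<le> \<epsilon>"
  shows "infdist 0 ((\<lambda>n. - gy x1 y1 + n) ` normal_cone Y y1) \<le> (Ly * D + r2 * (D + 1) + D / \<alpha>) * \<epsilon>"
proof -
  have y1': "y1 = closest_point Y (y0 - \<alpha> *\<^sub>R (- gradyF gy r2 x1 y0 v0))" using y1 by simp
  have "infdist 0 ((\<lambda>n. - gy x1 y1 + n) ` normal_cone Y y1)
      \<le> norm ((gy x1 y0 - gy x1 y1) - r2 *\<^sub>R (y0 - v0)) + norm (y0 - y1) / \<alpha>"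
    using infdist_normal_cone_projected_step[OF Y(2,3,1) \<alpha>,
        where x = y0 and d = "- gradyF gy r2 x1 y0 v0" and g = "- gy x1 y1"]
    unfolding y1'[symmetric] by (simp add: gradyF_def algebra_simps)
  also have "\<dots> \<le> Ly * norm (y0 - y1) + r2 * (norm (y0 - y1) + norm (y1 - v0)) + norm (y0 - y1) / \<alpha>"
  proof -
    have "norm (gy x1 y0 - gy x1 y1) \<le> Ly * (norm (x1 - x1) + norm (y0 - y1))"
      using L mem unfolding lipschitz_grads_def by blast
    moreover have "norm (y0 - v0) \<le> norm (y0 - y1) + norm (y1 - v0)"
      using norm_triangle_ineq[of "y0 - y1" "y1 - v0"] by simp
    ultimately show ?thesis
      using norm_triangle_ineq4[of "gy x1 y0 - gy x1 y1" "r2 *\<^sub>R (y0 - v0)"] \<open>0 \<le> r2\<close>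
      by (smt (verit) mult_left_mono norm_scaleR abs_of_nonneg diff_self norm_zero)
  qed
  also have "\<dots> \<le> Ly * (D * \<epsilon>) + r2 * (D * \<epsilon> + \<epsilon>) + D * \<epsilon> / \<alpha>"
    using dy dv assms(2,3) \<alpha> by (intro add_mono mult_left_mono divide_right_mono) auto
  finally show ?thesis by (simp add: algebra_simps)
qed

lemma dsgda_seq_in_sets:
  assumes "dsgda_seq X Y gx gy r1 r2 c \<alpha> \<beta> \<mu> xs ys zs vs" "xs 0 \<in> X" "ys 0 \<in> Y"
    and "closed X" "X \<noteq> {}" "closed Y" "Y \<noteq> {}"
  shows "xs t \<in> X \<and> ys t \<in> Y"
  using assms closest_point_in_set[of X] closest_point_in_set[of Y]
  unfolding dsgda_seq_def by (cases t) metis+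

lemma dsgda_iterate_eps_GS:
  fixes f :: "'a::euclidean_space \<Rightarrow> 'b::euclidean_space \<Rightarrow> real"
  assumes Lx: "0 \<le> Lx" "Lx < r1" and Ly: "0 \<le> Ly" "Ly < r2"
    and c: "c > 0" and \<alpha>: "\<alpha> > 0" and \<beta>: "\<beta> > 0" and \<mu>: "\<mu> > 0"
    and X: "X \<noteq> {}" "convex X" "compact X" and Y: "Y \<noteq> {}" "convex Y" "compact Y"
    and C1: "C1_with_grads f gx gy" and L: "lipschitz_grads X Y gx gy Lx Ly"
    and init: "xs 0 \<in> X" "ys 0 \<in> Y" and S: "dsgda_seq X Y gx gy r1 r2 c \<alpha> \<beta> \<mu> xs ys zs vs"
    and dx: "norm (xs t - xs (Suc t)) \<le> c * \<epsilon>"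
    and dyp: "norm (ys t - yplus X Y f gy r1 r2 \<alpha> (ys t) (zs t) (vs t)) \<le> \<alpha> * \<epsilon>"
    and dz: "norm (zs t - zs (Suc t)) \<le> \<beta> * \<epsilon>" and dv: "norm (vs t - vs (Suc t)) \<le> \<mu> * \<epsilon>"
  shows "eps_GS X Y gx gy (dsgda_rho Lx Ly r1 r2 c \<alpha> * \<epsilon>) (xs (Suc t)) (ys (Suc t))"
proof -
  define D where "D = dsgda_ystep_bound Lx Ly r1 c \<alpha>"
  have cl: "closed X" "closed Y" using X(3) Y(3) by (simp_all add: compact_imp_closed)
  have mem: "xs t \<in> X" "ys t \<in> Y" "xs (Suc t) \<in> X" "ys (Suc t) \<in> Y"
    using dsgda_seq_in_sets[OF S init cl(1) X(1) cl(2) Y(1)] by blast+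
  have x1: "xs (Suc t) = closest_point X (xs t - c *\<^sub>R gradxF gx r1 (xs t) (ys t) (zs t))"
    and y1: "ys (Suc t) = closest_point Y (ys t + \<alpha> *\<^sub>R gradyF gy r2 (xs (Suc t)) (ys t) (vs t))"
    and z1: "zs (Suc t) = zs t + \<beta> *\<^sub>R (xs (Suc t) - zs t)"
    and v1: "vs (Suc t) = vs t + \<mu> *\<^sub>R (ys (Suc t) - vs t)"
    using S unfolding dsgda_seq_def by blast+
  have dxz: "norm (xs (Suc t) - zs t) \<le> \<epsilon>"
    using dz \<beta> unfolding z1 by (simp add: norm_minus_commute)
  have dyv: "norm (ys (Suc t) - vs t) \<le> \<epsilon>"
    using dv \<mu> unfolding v1 by (simp add: norm_minus_commute)
  have dy: "norm (ys t - ys (Suc t)) \<le> D * \<epsilon>"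
    unfolding D_def
    by (rule dsgda_y_step_le[OF C1 L Lx Ly(1) X Y(1,2) cl(2) mem(1,2) c \<alpha> x1 y1 dx dyp])
  have "0 \<le> \<epsilon>" using dx c by (smt (verit) norm_ge_zero zero_le_mult_iff)
  moreover have "infdist 0 ((\<lambda>n. gx (xs (Suc t)) (ys (Suc t)) + n) ` normal_cone X (xs (Suc t)))
      \<le> (Lx * (c + D) + r1 * (c + 1) + 1) * \<epsilon>"
    using Lx by (intro dsgda_x_residual_le[OF L _ _ X(1,2) cl(1) mem(1,3,2,4) c x1 dx dxz dy]) auto
  moreover have "infdist 0 ((\<lambda>n. - gy (xs (Suc t)) (ys (Suc t)) + n) ` normal_cone Y (ys (Suc t)))
      \<le> (Ly * D + r2 * (D + 1) + D / \<alpha>) * \<epsilon>"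
    using Ly by (intro dsgda_y_residual_le[OF L _ _ Y(1,2) cl(2) mem(3,2,4) \<alpha> y1 dy dyv]) auto
  ultimately show ?thesis
    unfolding eps_GS_def dsgda_rho_def Let_def D_def[symmetric] using mem(3,4)
    by (smt (verit) max.cobounded1 max.cobounded2 mult_right_mono)
qed

theorem lemma8:
  fixes Lx Ly r1 r2 c \<alpha> \<beta> \<mu> :: real
  assumes "Lx > 0" "Ly > 0" "r1 > Lx" "r2 > Ly" "c > 0" "\<alpha> > 0"
    "0 < \<beta>" "\<beta> < 1" "0 < \<mu>" "\<mu> < 1"
  shows "\<exists>\<rho>>0. \<forall>(X::'a::euclidean_space set) (Y::'b::euclidean_space set)
            (f::'a \<Rightarrow> 'b \<Rightarrow> real) gx gy xs ys zs vs.
     X \<noteq> {} \<and> convex X \<and> compact X \<and> Y \<noteq> {} \<and> convex Y \<and> compact Y \<and>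
     C1_with_grads f gx gy \<and> lipschitz_grads X Y gx gy Lx Ly \<and>
     xs 0 \<in> X \<and> ys 0 \<in> Y \<and>
     dsgda_seq X Y gx gy r1 r2 c \<alpha> \<beta> \<mu> xs ys zs vs \<longrightarrow>
     (\<forall>\<epsilon>\<ge>0. \<forall>t.
        max (max (norm (xs t - xs (Suc t)) / c)
                 (norm (ys t - yplus X Y f gy r1 r2 \<alpha> (ys t) (zs t) (vs t)) / \<alpha>))
            (max (norm (zs t - zs (Suc t)) / \<beta>) (norm (vs t - vs (Suc t)) / \<mu>)) \<le> \<epsilon>
        \<longrightarrow> eps_GS X Y gx gy (\<rho> * \<epsilon>) (xs (Suc t)) (ys (Suc t)))"
proof (intro exI[of _ "dsgda_rho Lx Ly r1 r2 c \<alpha>"] conjI allI impI)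
  show "dsgda_rho Lx Ly r1 r2 c \<alpha> > 0"
    using assms by (intro dsgda_rho_pos) auto
next
  fix X :: "'a set" and Y :: "'b set" and f :: "'a \<Rightarrow> 'b \<Rightarrow> real" and gx gy xs ys zs vs \<epsilon> t
  assume H: "X \<noteq> {} \<and> convex X \<and> compact X \<and> Y \<noteq> {} \<and> convex Y \<and> compact Y \<and>
     C1_with_grads f gx gy \<and> lipschitz_grads X Y gx gy Lx Ly \<and>
     xs 0 \<in> X \<and> ys 0 \<in> Y \<and> dsgda_seq X Y gx gy r1 r2 c \<alpha> \<beta> \<mu> xs ys zs vs"
    and M: "max (max (norm (xs t - xs (Suc t)) / c)
                 (norm (ys t - yplus X Y f gy r1 r2 \<alpha> (ys t) (zs t) (vs t)) / \<alpha>))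
            (max (norm (zs t - zs (Suc t)) / \<beta>) (norm (vs t - vs (Suc t)) / \<mu>)) \<le> \<epsilon>"
  from M assms have "norm (xs t - xs (Suc t)) \<le> c * \<epsilon>"
    "norm (ys t - yplus X Y f gy r1 r2 \<alpha> (ys t) (zs t) (vs t)) \<le> \<alpha> * \<epsilon>"
    "norm (zs t - zs (Suc t)) \<le> \<beta> * \<epsilon>" "norm (vs t - vs (Suc t)) \<le> \<mu> * \<epsilon>"
    by (simp_all add: pos_divide_le_eq mult.commute)
  with H assms show "eps_GS X Y gx gy (dsgda_rho Lx Ly r1 r2 c \<alpha> * \<epsilon>) (xs (Suc t)) (ys (Suc t))"
    by (intro dsgda_iterate_eps_GS[where f = f and \<beta> = \<beta> and \<mu> = \<mu> and zs = zs and vs = vs]) auto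
qed

end
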